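(* Let $(M,B)$ be a based $\mathbf U$-module (in Lusztig's sense) with weights bounded above, with bar involution $\psi$, and let ${}_{\mathcal A}M$ be the $\mathcal A$-lattice spanned by $B$, $\mathcal A=\mathbb Z[v,v^{-1}]$. Assume the anti-linear involution $\psi_\imath:=\Upsilon\circ\psi$ of $M$ preserves ${}_{\mathcal A}M$. Then (1) $M$ admits a unique basis $B^\imath=\{b^\imath\mid b\in B\}$ such that each $b^\imath$ is $\psi_\imath$-invariant and $b^\imath\in b+\sum_{b'\in B,\,|b|<|b'|}v^{-1}\mathbb Z[v^{-1}]\,b'$; (2) $B^\imath$ is an $\mathcal A$-basis of ${}_{\mathcal A}M$ and a $\mathbb Z[v^{-1}]$-basis of the $\mathbb Z[v^{-1}]$-lattice spanned by $B$.
   Context: Setting of a quantum symmetric pair $(\mathbf U,\mathbf U^\imath)$ with parameters as in the quasi K-matrix theorem: $\mathbf U^\imath\subset\mathbf U$ is generated by $B_i=F_i+\varsigma_iT_{w_\bullet}(E_{\tau i})\tilde K_i^{-1}+\kappa_i\tilde K_i^{-1}$ ($i\in\mathbb I_\circ$), $K_\mu$ ($\theta\mu=\mu$), $E_j,F_j$ ($j\in\mathbb I_\bullet$), and $\Upsilon=\sum_\mu\Upsilon_\mu$ ($\Upsilon_\mu\in\mathbf U^+_\mu$, $\Upsilon_0=1$) is the quasi K-matrix, characterized by $\psi_\imath(u)\Upsilon=\Upsilon\psi(u)$ for all $u\in\mathbf U^\imath$, where $\psi_\imath$ is the bar involution of $\mathbf U^\imath$ fixing $B_i,E_j,F_j$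 and inverting $K_\mu$; $\Upsilon$ acts on modules with weights bounded above. $|x|$ denotes the weight of a weight vector $x$; the partial order on $X$ is $\lambda\le\lambda'$ iff $\lambda'-\lambda\in\mathbb N\mathbb I$. Then $M$ with $\psi_\imath$ satisfies $\psi_\imath(um)=\psi_\imath(u)\psi_\imath(m)$ for $u\in\mathbf U^\imath$. *)

theory Defs
  imports "HOL-Library.FuncSet" "HOL-Computational_Algebra.Polynomial" "HOL-Computational_Algebra.Fraction_Field"
begin

type_synonym qv = "rat poly fract"

definition vv :: qv where "vv = Fract [:0, 1:] 1"

definition vinv :: qv where "vinv = inverse vv"

definition fpoly :: "rat poly \<Rightarrow> qv \<Rightarrow> qv" where
  "fpoly p x = poly (map_poly (\<lambda>c. Fract [:c:] 1) p) x"

text \<open>Bar involution of Q(v): the field automorphism fixing Q with v mapped to v^-1.\<close>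
definition qbar :: "qv \<Rightarrow> qv" where
  "qbar x = (SOME y. \<exists>p q. q \<noteq> 0 \<and> x = Fract p q \<and> y = fpoly p vinv / fpoly q vinv)"

definition Zvinv :: "qv set" where
  "Zvinv = {fpoly (map_poly of_int p) vinv | p :: int poly. True}"

definition vinvZvinv :: "qv set" where
  "vinvZvinv = {vinv * x | x. x \<in> Zvinv}"

definition Aring :: "qv set" where
  "Aring = {vv ^ n * x | n x. x \<in> Zvinv}"

definition lattice :: "(qv \<Rightarrow> 'm \<Rightarrow> 'm) \<Rightarrow> qv set \<Rightarrow> 'm::ab_group_add set \<Rightarrow> 'm set" where
  "lattice sc R S = {m. \<exists>T c. finite T \<and> T \<subseteq> S \<and> (\<forall>t\<in>T. c t \<in> R) \<and> m = (\<Sum>t\<in>T. sc (c t) t)}"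

definition indep_over :: "(qv \<Rightarrow> 'm \<Rightarrow> 'm) \<Rightarrow> qv set \<Rightarrow> 'm::ab_group_add set \<Rightarrow> bool" where
  "indep_over sc R S \<longleftrightarrow> (\<forall>T c. finite T \<and> T \<subseteq> S \<and> (\<forall>t\<in>T. c t \<in> R) \<and> (\<Sum>t\<in>T. sc (c t) t) = 0
        \<longrightarrow> (\<forall>t\<in>T. c t = 0))"

definition lattice_basis :: "(qv \<Rightarrow> 'm \<Rightarrow> 'm) \<Rightarrow> qv set \<Rightarrow> 'm::ab_group_add set \<Rightarrow> 'm set \<Rightarrow> bool" where
  "lattice_basis sc R S L \<longleftrightarrow> indep_over sc R S \<and> lattice sc R S = L"

definition nsmul :: "nat \<Rightarrow> 'w::ab_group_add \<Rightarrow> 'w" where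
  "nsmul n a = (\<Sum>k<n. a)"

definition NI :: "'i set \<Rightarrow> ('i \<Rightarrow> 'w::ab_group_add) \<Rightarrow> 'w set" where
  "NI I alpha = {(\<Sum>i\<in>I. nsmul (n i) (alpha i)) | n. True}"

definition wle :: "'i set \<Rightarrow> ('i \<Rightarrow> 'w::ab_group_add) \<Rightarrow> 'w \<Rightarrow> 'w \<Rightarrow> bool" where
  "wle I alpha l l' \<longleftrightarrow> l' - l \<in> NI I alpha"

definition wlt :: "'i set \<Rightarrow> ('i \<Rightarrow> 'w::ab_group_add) \<Rightarrow> 'w \<Rightarrow> 'w \<Rightarrow> bool" where
  "wlt I alpha l l' \<longleftrightarrow> wle I alpha l l' \<and> l \<noteq> l'"

text \<open>Upsilon acts as the (locally finite, since weights are bounded above) sum of its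
  components Upsilon_mu.\<close>
definition Ups_act :: "('w \<Rightarrow> 'm \<Rightarrow> 'm) \<Rightarrow> 'm::ab_group_add \<Rightarrow> 'm" where
  "Ups_act ups m = (\<Sum>\<mu>\<in>{\<mu>. ups \<mu> m \<noteq> 0}. ups \<mu> m)"

end

theory Submission
  imports Defs "HOL-Computational_Algebra.Polynomial_Factorial"
begin

text \<open>
  Write \<open>V = v\<^sup>-\<^sup>1\<int>[v\<^sup>-\<^sup>1]\<close>. Every element of \<open>\<A> = \<int>[v, v\<^sup>-\<^sup>1]\<close> is uniquely of the form
  \<open>a\<^sup>- + z + c\<close> with \<open>a, c \<in> V\<close> and \<open>z \<in> \<int>\<close>. Hence the only bar-invariant element of \<open>V\<close> is
  \<open>0\<close>, and every bar-anti-invariant element of \<open>\<A>\<close> is \<open>c - c\<^sup>-\<close> for some \<open>c \<in> V\<close>.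

  Since \<open>\<Upsilon>\<^sub>0 = 1\<close> and \<open>\<Upsilon>\<^sub>\<mu>\<close> raises weights by \<open>\<mu>\<close>, \<open>\<psi>\<^sub>\<imath> b - b\<close> lies in the
  \<open>\<A>\<close>-span of the basis vectors of strictly higher weight. Working downwards from the top
  weights (which exist since weights are bounded above), suppose \<open>t\<^sup>\<imath>\<close> is constructed for all
  \<open>t\<close> above \<open>b\<close>, and write \<open>\<psi>\<^sub>\<imath> b - b = \<Sum> s\<^sub>t t\<^sup>\<imath>\<close> with \<open>s\<^sub>t \<in> \<A>\<close>. Applying the involution
  \<open>\<psi>\<^sub>\<imath>\<close> once more shows \<open>s\<^sub>t + s\<^sub>t\<^sup>- = 0\<close>, so \<open>s\<^sub>t = c\<^sub>t - c\<^sub>t\<^sup>-\<close> with \<open>c\<^sub>t \<in> V\<close>, and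
  \<open>b\<^sup>\<imath> = b + \<Sum> c\<^sub>t t\<^sup>\<imath>\<close> is \<open>\<psi>\<^sub>\<imath>\<close>-invariant. Uniqueness: a \<open>\<psi>\<^sub>\<imath>\<close>-invariant element of the
  \<open>V\<close>-lattice has, at a basis vector of minimal weight in its support, a bar-invariant
  coefficient in \<open>V\<close>, which therefore vanishes. The basis properties follow from unitriangularity.
\<close>

section \<open>The field \<open>\<rat>(v)\<close> and its bar involution\<close>

lemma map_poly_add_hom:
  assumes "h 0 = 0" "\<And>a b. h (a + b) = h a + h b"
  shows "map_poly h (p + q) = map_poly h p + map_poly h q"
  by (intro poly_eqI) (simp add: coeff_map_poly assms)

lemma poly_map_poly_mult_hom:
  fixes h :: "'a::comm_ring_1 \<Rightarrow> 'b::comm_ring_1"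
  assumes h0: "h 0 = 0" and h_add: "\<And>a b. h (a + b) = h a + h b"
    and h_mult: "\<And>a b. h (a * b) = h a * h b"
  shows "poly (map_poly h (p * q)) x = poly (map_poly h p) x * poly (map_poly h q) x"
proof (induction p)
  case (pCons a p)
  have "map_poly h (pCons a p * q) = smult (h a) (map_poly h q) + pCons 0 (map_poly h (p * q))"
    using h0 h_mult by (simp add: map_poly_add_hom[OF h0 h_add] map_poly_smult map_poly_pCons)
  then show ?case using pCons h0 by (simp add: map_poly_pCons algebra_simps)
qed (simp add: h0)

definition rat_qv :: "rat \<Rightarrow> qv" where
  "rat_qv c = to_fract [:c:]"

lemma rat_qv_0 [simp]: "rat_qv 0 = 0"
  and rat_qv_1 [simp]: "rat_qv 1 = 1"
  and rat_qv_add: "rat_qv (a + b) = rat_qv a + rat_qv b"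
  and rat_qv_mult: "rat_qv (a * b) = rat_qv a * rat_qv b"
  by (simp_all add: rat_qv_def flip: to_fract_add to_fract_mult one_pCons)

lemma fpoly_conv_map_poly: "fpoly p x = poly (map_poly rat_qv p) x"
  unfolding fpoly_def rat_qv_def[abs_def] to_fract_def ..

lemma fpoly_0 [simp]: "fpoly 0 x = 0"
  by (simp add: fpoly_def)

lemma fpoly_pCons: "fpoly (pCons a p) x = rat_qv a + x * fpoly p x"
  by (simp add: fpoly_conv_map_poly map_poly_pCons)

lemma fpoly_const: "fpoly [:c:] x = rat_qv c"
  by (simp add: fpoly_conv_map_poly map_poly_pCons)

lemma fpoly_1 [simp]: "fpoly 1 x = 1"
  by (simp add: fpoly_conv_map_poly)

lemma fpoly_add: "fpoly (p + q) x = fpoly p x + fpoly q x"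
  by (simp add: fpoly_conv_map_poly map_poly_add_hom rat_qv_add)

lemma fpoly_mult: "fpoly (p * q) x = fpoly p x * fpoly q x"
  by (simp add: fpoly_conv_map_poly poly_map_poly_mult_hom rat_qv_add rat_qv_mult)

lemma vv_nonzero: "vv \<noteq> 0"
  by (simp add: vv_def Zero_fract_def eq_fract)

lemma vinv_nonzero: "vinv \<noteq> 0"
  by (simp add: vinv_def vv_nonzero)

lemma vv_mult_vinv: "vv * vinv = 1"
  by (simp add: vinv_def vv_nonzero)

lemma fpoly_vv: "fpoly p vv = to_fract p"
proof (induction p)
  case (pCons a p)
  have "fpoly (pCons a p) vv = rat_qv a + vv * fpoly p vv"
    by (rule fpoly_pCons)
  also have "\<dots> = to_fract [:a:] + to_fract [:0, 1:] * to_fract p"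
    using pCons.IH by (simp add: rat_qv_def vv_def to_fract_def)
  also have "\<dots> = to_fract (pCons a p)"
    by (simp flip: to_fract_add to_fract_mult)
  finally show ?case .
qed simp

lemma fpoly_vinv_nonzero:
  assumes "q \<noteq> 0"
  shows "fpoly q vinv \<noteq> 0"
proof
  assume "fpoly q vinv = 0"
  then have "poly (reflect_poly (map_poly rat_qv q)) vv = 0"
    using poly_reflect_poly_nz[OF vv_nonzero] by (simp add: fpoly_conv_map_poly vinv_def)
  also have "reflect_poly (map_poly rat_qv q) = map_poly rat_qv (reflect_poly q)"
    by (intro poly_eqI) (simp add: coeff_reflect_poly coeff_map_poly degree_map_poly rat_qv_def)
  finally have "reflect_poly q = 0"
    using fpoly_vv[of "reflect_poly q"] by (simp add: fpoly_conv_map_poly)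
  with assms show False by simp
qed

lemma qbar_Fract:
  assumes "q \<noteq> 0"
  shows "qbar (Fract p q) = fpoly p vinv / fpoly q vinv"
proof -
  let ?P = "\<lambda>y. \<exists>p' q'. q' \<noteq> 0 \<and> Fract p q = Fract p' q' \<and> y = fpoly p' vinv / fpoly q' vinv"
  have "?P (qbar (Fract p q))"
    unfolding qbar_def by (rule someI[of ?P]) (use assms in blast)
  then obtain p' q' where pq: "q' \<noteq> 0" "Fract p q = Fract p' q'"
    "qbar (Fract p q) = fpoly p' vinv / fpoly q' vinv" by blast
  then have "fpoly p vinv * fpoly q' vinv = fpoly p' vinv * fpoly q vinv"
    using assms by (metis eq_fract(1) fpoly_mult)
  then show ?thesis using pq fpoly_vinv_nonzero[OF assms] fpoly_vinv_nonzero[OF pq(1)]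
    by (simp add: frac_eq_eq)
qed

lemma qbar_add: "qbar (x + y) = qbar x + qbar y"
  and qbar_mult: "qbar (x * y) = qbar x * qbar y"
  by (cases x, cases y, simp add: qbar_Fract fpoly_add fpoly_mult fpoly_vinv_nonzero field_simps)+

lemma qbar_rat_qv: "qbar (rat_qv c) = rat_qv c"
proof -
  have "qbar (Fract [:c:] 1) = fpoly [:c:] vinv / fpoly 1 vinv"
    by (rule qbar_Fract) simp
  then show ?thesis
    by (simp add: fpoly_const rat_qv_def to_fract_def)
qed

lemma qbar_0 [simp]: "qbar 0 = 0"
  using qbar_rat_qv[of 0] by simp

lemma qbar_1 [simp]: "qbar 1 = 1"
  using qbar_rat_qv[of 1] by simp

lemma qbar_uminus: "qbar (- x) = - qbar x"
  using qbar_add[of x "- x"] by (simp add: eq_neg_iff_add_eq_0)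

lemma qbar_diff: "qbar (x - y) = qbar x - qbar y"
  using qbar_add[of x "- y"] by (simp add: qbar_uminus)

lemma qbar_of_int: "qbar (of_int k) = of_int k"
  by (induction k rule: int_induct[where k = 0]) (simp_all add: qbar_add qbar_diff)

lemma qbar_vv: "qbar vv = vinv"
  using qbar_Fract[of 1 "[:0, 1:]"] by (simp add: vv_def fpoly_conv_map_poly map_poly_pCons)

lemma qbar_vinv: "qbar vinv = vv"
proof -
  have "vinv * qbar vinv = 1"
    using qbar_mult[of vv vinv] by (simp add: qbar_vv vv_mult_vinv)
  then show ?thesis
    using vv_mult_vinv vinv_nonzero by (metis mult.commute mult_cancel_left)
qed

lemma qbar_fpoly: "qbar (fpoly p x) = fpoly p (qbar x)"
  by (induction p) (simp_all add: fpoly_pCons qbar_add qbar_mult qbar_rat_qv)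

lemma qbar_inverse: "qbar (inverse x) = inverse (qbar x)"
proof (cases "x = 0")
  case False
  then have "qbar x * qbar (inverse x) = 1"
    by (simp flip: qbar_mult)
  then show ?thesis by (simp add: inverse_unique)
qed simp

lemma qbar_qbar [simp]: "qbar (qbar x) = x"
proof (cases x)
  case (Fract p q)
  then have "qbar (qbar x) = fpoly p vv / fpoly q vv"
    by (simp add: qbar_Fract qbar_fpoly qbar_vinv divide_inverse qbar_mult qbar_inverse)
  then show ?thesis
    using Fract by (simp add: fpoly_vv Fract_conv_to_fract)
qed

section \<open>The rings \<open>\<int>[v\<^sup>-\<^sup>1]\<close>, \<open>v\<^sup>-\<^sup>1\<int>[v\<^sup>-\<^sup>1]\<close> and \<open>\<A>\<close>\<close>

definition ipoly :: "int poly \<Rightarrow> qv \<Rightarrow> qv" where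
  "ipoly p x = poly (map_poly of_int p) x"

lemma ipoly_0 [simp]: "ipoly 0 x = 0"
  and ipoly_pCons [simp]: "ipoly (pCons c p) x = of_int c + x * ipoly p x"
  by (simp_all add: ipoly_def map_poly_pCons)

lemma ipoly_add: "ipoly (p + q) x = ipoly p x + ipoly q x"
  by (simp add: ipoly_def map_poly_add_hom)

lemma ipoly_mult: "ipoly (p * q) x = ipoly p x * ipoly q x"
  by (simp add: ipoly_def poly_map_poly_mult_hom)

lemma ipoly_uminus: "ipoly (- p) x = - ipoly p x"
  using ipoly_add[of p "- p" x] by (simp add: eq_neg_iff_add_eq_0)

lemma ipoly_monom: "ipoly (monom c n) x = of_int c * x ^ n"
  by (simp add: ipoly_def map_poly_monom poly_monom)

lemma rat_qv_of_int: "rat_qv (of_int k) = of_int k"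
proof (induction k rule: int_induct[where k = 0])
  case (step2 i)
  have "rat_qv (of_int i - 1) + 1 = rat_qv (of_int i)"
    using rat_qv_add[of "of_int i - 1" 1] by simp
  then show ?case using step2 by (simp add: algebra_simps)
qed (simp_all add: rat_qv_add)

lemma fpoly_of_int_poly: "fpoly (map_poly of_int p) x = ipoly p x"
  by (simp add: fpoly_conv_map_poly ipoly_def map_poly_map_poly o_def rat_qv_of_int)

lemma qbar_ipoly: "qbar (ipoly p x) = ipoly p (qbar x)"
  by (simp add: qbar_fpoly flip: fpoly_of_int_poly)

lemma ipoly_vv_eq_0_iff: "ipoly p vv = 0 \<longleftrightarrow> p = 0"
  by (simp add: fpoly_vv map_poly_eq_0_iff flip: fpoly_of_int_poly)

lemma Zvinv_eq: "Zvinv = range (\<lambda>p. ipoly p vinv)"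
  by (auto simp: Zvinv_def fpoly_of_int_poly)

lemma vinvZvinv_eq: "vinvZvinv = (\<lambda>p. vinv * ipoly p vinv) ` UNIV"
  by (auto simp: vinvZvinv_def Zvinv_eq)

definition subrng :: "qv set \<Rightarrow> bool" where
  "subrng R \<longleftrightarrow> 0 \<in> R \<and> (\<forall>a\<in>R. \<forall>b\<in>R. a + b \<in> R \<and> a * b \<in> R \<and> - a \<in> R)"

lemma subrngD:
  assumes "subrng R"
  shows "0 \<in> R" and "a \<in> R \<Longrightarrow> b \<in> R \<Longrightarrow> a + b \<in> R" and "a \<in> R \<Longrightarrow> b \<in> R \<Longrightarrow> a * b \<in> R"
    and "a \<in> R \<Longrightarrow> - a \<in> R" and "a \<in> R \<Longrightarrow> b \<in> R \<Longrightarrow> a - b \<in> R"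
  using assms unfolding subrng_def by (fastforce, blast, blast, blast, metis diff_conv_add_uminus)

lemma subrng_Zvinv: "subrng Zvinv"
  unfolding subrng_def Zvinv_eq
proof (intro conjI ballI)
  show "0 \<in> range (\<lambda>p. ipoly p vinv)"
    by (rule image_eqI[of _ _ 0]) simp_all
  fix a b assume "a \<in> range (\<lambda>p. ipoly p vinv)" "b \<in> range (\<lambda>p. ipoly p vinv)"
  then obtain p q where pq: "a = ipoly p vinv" "b = ipoly q vinv" by blast
  show "a + b \<in> range (\<lambda>p. ipoly p vinv)"
    unfolding pq by (rule image_eqI[of _ _ "p + q"]) (simp_all add: ipoly_add)
  show "a * b \<in> range (\<lambda>p. ipoly p vinv)"
    unfolding pq by (rule image_eqI[of _ _ "p * q"]) (simp_all add: ipoly_mult)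
  show "- a \<in> range (\<lambda>p. ipoly p vinv)"
    unfolding pq by (rule image_eqI[of _ _ "- p"]) (simp_all add: ipoly_uminus)
qed

lemma of_int_in_Zvinv: "of_int z \<in> Zvinv"
  unfolding Zvinv_eq by (rule image_eqI[of _ _ "[:z:]"]) simp_all

lemma one_in_Zvinv: "1 \<in> Zvinv"
  using of_int_in_Zvinv[of 1] by simp

lemma vinv_mult_in_vinvZvinv: "y \<in> Zvinv \<Longrightarrow> vinv * y \<in> vinvZvinv"
  by (auto simp: vinvZvinv_def)

lemma vv_mult_in_Zvinv: "c \<in> vinvZvinv \<Longrightarrow> vv * c \<in> Zvinv"
  by (auto simp: vinvZvinv_def mult.assoc[symmetric] vv_mult_vinv)

lemma vinvZvinv_subset_Zvinv: "vinvZvinv \<subseteq> Zvinv"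
  unfolding vinvZvinv_eq Zvinv_eq by (auto intro!: image_eqI[of _ _ "pCons 0 _"])

lemma subrng_vinvZvinv: "subrng vinvZvinv"
  unfolding subrng_def vinvZvinv_def
proof (intro conjI ballI)
  show "0 \<in> {vinv * x |x. x \<in> Zvinv}"
    using subrngD(1)[OF subrng_Zvinv] by force
  fix a b assume "a \<in> {vinv * x |x. x \<in> Zvinv}" "b \<in> {vinv * x |x. x \<in> Zvinv}"
  then obtain x y where xy: "a = vinv * x" "b = vinv * y" "x \<in> Zvinv" "y \<in> Zvinv" by blast
  have "a + b = vinv * (x + y)" "a * b = vinv * (vinv * x * y)" "- a = vinv * (- x)"
    using xy by (simp_all add: algebra_simps)
  moreover have "vinv * x \<in> Zvinv"
    using xy(3) vinv_mult_in_vinvZvinv vinvZvinv_subset_Zvinv by blast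
  then have "x + y \<in> Zvinv" "vinv * x * y \<in> Zvinv" "- x \<in> Zvinv"
    using xy(3,4) subrngD[OF subrng_Zvinv] by simp_all
  ultimately show "a + b \<in> {vinv * x |x. x \<in> Zvinv}" "a * b \<in> {vinv * x |x. x \<in> Zvinv}"
    "- a \<in> {vinv * x |x. x \<in> Zvinv}" by blast+
qed

lemma Zvinv_subset_Aring: "Zvinv \<subseteq> Aring"
proof
  fix y assume "y \<in> Zvinv"
  then show "y \<in> Aring"
    unfolding Aring_def by (intro CollectI exI[of _ 0] exI[of _ y]) simp
qed

lemma vinv_power_mult_in_Zvinv: "y \<in> Zvinv \<Longrightarrow> vinv ^ k * y \<in> Zvinv"
  by (induction k) (use vinv_mult_in_vinvZvinv vinvZvinv_subset_Zvinv in \<open>auto simp: mult.assoc\<close>)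

lemma vv_power_mult_add_in_Aring:
  assumes "x \<in> Zvinv" "y \<in> Zvinv" "n \<le> m"
  shows "vv ^ n * x + vv ^ m * y \<in> Aring"
proof -
  obtain k where m: "m = n + k"
    using assms(3) le_Suc_ex by blast
  have "vv ^ n = vv ^ m * vinv ^ (m - n)"
    unfolding m by (simp add: power_add mult.assoc flip: power_mult_distrib add: vv_mult_vinv)
  then have "vv ^ n * x + vv ^ m * y = vv ^ m * (vinv ^ (m - n) * x + y)"
    by (simp add: algebra_simps)
  moreover have "vinv ^ (m - n) * x + y \<in> Zvinv"
    using assms vinv_power_mult_in_Zvinv subrngD(2)[OF subrng_Zvinv] by blast
  ultimately show ?thesis unfolding Aring_def by blast
qed

lemma subrng_Aring: "subrng Aring"
  unfolding subrng_def
proof (intro conjI ballI)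
  show "0 \<in> Aring"
    using Zvinv_subset_Aring subrngD(1)[OF subrng_Zvinv] by blast
  fix a b assume "a \<in> Aring" "b \<in> Aring"
  then obtain n m x y where ab: "a = vv ^ n * x" "b = vv ^ m * y" "x \<in> Zvinv" "y \<in> Zvinv"
    unfolding Aring_def by blast
  show "a + b \<in> Aring"
    using vv_power_mult_add_in_Aring[of x y n m] vv_power_mult_add_in_Aring[of y x m n] ab
    by (cases "n \<le> m") (auto simp: add.commute)
  have "a * b = vv ^ (n + m) * (x * y)" "- a = vv ^ n * (- x)"
    using ab by (simp_all add: power_add algebra_simps)
  moreover have "x * y \<in> Zvinv" "- x \<in> Zvinv"
    using ab(3,4) subrngD[OF subrng_Zvinv] by simp_all
  ultimately show "a * b \<in> Aring" "- a \<in> Aring"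
    unfolding Aring_def by blast+
qed

lemma Zvinv_split:
  assumes "y \<in> Zvinv"
  obtains z c where "c \<in> vinvZvinv" "y = of_int z + c"
proof -
  obtain p where "y = ipoly p vinv"
    using assms unfolding Zvinv_eq by blast
  moreover obtain z q where "p = pCons z q"
    by (cases p)
  ultimately show ?thesis
    using that[of "vinv * ipoly q vinv" z] unfolding vinvZvinv_eq by auto
qed

lemma Aring_decomposition:
  assumes "s \<in> Aring"
  obtains a z c where "a \<in> vinvZvinv" "c \<in> vinvZvinv" "s = qbar a + of_int z + c"
proof -
  have "\<exists>a\<in>vinvZvinv. \<exists>z. \<exists>c\<in>vinvZvinv. vv ^ n * y = qbar a + of_int z + c"
    if "y \<in> Zvinv" for n y
  proof (induction n)
    case 0
    obtain z c where "c \<in> vinvZvinv" "y = of_int z + c"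
      using Zvinv_split[OF \<open>y \<in> Zvinv\<close>] .
    then show ?case
      using subrngD(1)[OF subrng_vinvZvinv] by force
  next
    case (Suc n)
    then obtain a z c where azc: "a \<in> vinvZvinv" "c \<in> vinvZvinv"
      "vv ^ n * y = qbar a + of_int z + c" by blast
    obtain z' c' where z'c': "c' \<in> vinvZvinv" "vv * c = of_int z' + c'"
      using Zvinv_split[OF vv_mult_in_Zvinv[OF azc(2)]] .
    have "vv ^ Suc n * y = qbar (vinv * (a + of_int z)) + of_int z' + c'"
      using azc(3) z'c'(2) by (simp add: qbar_mult qbar_add qbar_vinv qbar_of_int algebra_simps)
    moreover have "vinv * (a + of_int z) \<in> vinvZvinv"
      using azc(1) vinvZvinv_subset_Zvinv of_int_in_Zvinv subrngD(2)[OF subrng_Zvinv]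
      by (blast intro: vinv_mult_in_vinvZvinv)
    ultimately show ?case
      using z'c'(1) by blast
  qed
  then show ?thesis
    using assms that unfolding Aring_def by blast
qed

lemma vv_power_mult_ipoly_vinv:
  "degree q \<le> n \<Longrightarrow> \<exists>r. degree r \<le> n \<and> vv ^ n * ipoly q vinv = ipoly r vv"
proof (induction q arbitrary: n)
  case (pCons a q)
  show ?case
  proof (cases "q = 0")
    case True
    then show ?thesis
      by (intro exI[of _ "monom a n"]) (simp add: ipoly_monom degree_monom_le mult.commute)
  next
    case False
    with pCons.prems obtain n' where n: "n = Suc n'" "degree q \<le> n'"
      by (cases n) auto
    from pCons.IH[OF n(2)] obtain r where r: "degree r \<le> n'" "vv ^ n' * ipoly q vinv = ipoly r vv"
      by blast
    have "vv ^ n * ipoly (pCons a q) vinv = of_int a * vv ^ n + vv ^ n' * ((vv * vinv) * ipoly q vinv)"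
      by (simp add: n algebra_simps)
    also have "\<dots> = ipoly (monom a n + r) vv"
      using r vv_mult_vinv by (simp add: ipoly_add ipoly_monom)
    finally show ?thesis
      using r n by (intro exI[of _ "monom a n + r"]) (simp add: degree_add_le degree_monom_le le_SucI)
  qed
qed (auto intro: exI[of _ 0])

text \<open>Writing \<open>a = v\<^sup>-\<^sup>1 p(v\<^sup>-\<^sup>1)\<close> and \<open>c = v\<^sup>-\<^sup>1 q(v\<^sup>-\<^sup>1)\<close> and multiplying by
  \<open>v\<^sup>m\<close> with \<open>m > deg q\<close> turns the equation into a polynomial identity in \<open>v\<close> whose three
  summands live in the disjoint degree ranges \<open>> m\<close>, \<open>= m\<close> and \<open>< m\<close>.\<close>
lemma Aring_decomposition_unique:
  assumes a: "a \<in> vinvZvinv" and c: "c \<in> vinvZvinv" and eq: "qbar a + of_int z + c = 0"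
  shows "a = 0 \<and> z = 0 \<and> c = 0"
proof -
  obtain p q where pq: "a = vinv * ipoly p vinv" "c = vinv * ipoly q vinv"
    using a c unfolding vinvZvinv_eq by blast
  define m where "m = Suc (degree q)"
  obtain r where r: "degree r \<le> degree q" "vv ^ degree q * ipoly q vinv = ipoly r vv"
    using vv_power_mult_ipoly_vinv[of q "degree q"] by auto
  have qbar_a: "qbar a = ipoly (pCons 0 p) vv"
    by (simp add: pq qbar_mult qbar_vinv qbar_ipoly)
  have vv_c: "vv ^ m * c = ipoly r vv"
    using r vv_mult_vinv by (simp add: m_def pq algebra_simps)
  have "ipoly (monom 1 m * pCons 0 p + monom z m + r) vv = vv ^ m * (qbar a + of_int z + c)"
    unfolding distrib_left qbar_a vv_c by (simp add: ipoly_add ipoly_mult ipoly_monom algebra_simps)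
  then have poly0: "monom 1 m * pCons 0 p + monom z m + r = 0"
    using eq ipoly_vv_eq_0_iff by simp
  have r_high: "coeff r k = 0" if "k \<ge> m" for k
    using r that by (intro coeff_eq_0) (simp add: m_def)
  have "coeff (pCons 0 p) j = 0" for j
  proof -
    have "coeff (monom 1 m * pCons 0 p + monom z m + r) (m + j) = 0"
      using poly0 by simp
    then show ?thesis
      using r_high[of "m + j"] by (simp only: coeff_add coeff_monom_mult coeff_monom) (cases j, auto)
  qed
  then have p0: "p = 0"
    by (metis coeff_pCons_Suc poly_eqI coeff_0)
  have "coeff (monom 1 m * pCons 0 p + monom z m + r) m = 0"
    using poly0 by simp
  then have z0: "z = 0"
    using r_high[of m] by (simp add: p0)
  then have "ipoly r vv = 0"
    using poly0 p0 by simp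
  then show ?thesis
    using vv_c vv_nonzero p0 z0 by (simp add: pq)
qed

lemma qbar_fixed_in_vinvZvinv:
  assumes "c \<in> vinvZvinv" "qbar c = c"
  shows "c = 0"
  using Aring_decomposition_unique[of c "- c" 0] assms subrngD(4)[OF subrng_vinvZvinv] by simp

lemma qbar_anti_invariant_Aring:
  assumes "s \<in> Aring" "qbar s = - s"
  obtains c where "c \<in> vinvZvinv" "s = c - qbar c"
proof -
  obtain a z c where azc: "a \<in> vinvZvinv" "c \<in> vinvZvinv" "s = qbar a + of_int z + c"
    using Aring_decomposition[OF assms(1)] .
  have "qbar (a + c) + of_int (2 * z) + (a + c) = s + qbar s"
    by (simp add: azc(3) qbar_add qbar_of_int)
  then have "a + c = 0" "z = 0"
    using Aring_decomposition_unique[of "a + c" "a + c" "2 * z"] azc(1,2) assms(2)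
      subrngD(2)[OF subrng_vinvZvinv] by simp_all
  then have "s = c - qbar c"
    using azc(3) by (simp add: eq_neg_iff_add_eq_0[symmetric] qbar_uminus)
  with azc(2) show thesis by (rule that)
qed

section \<open>Lattices in a \<open>\<rat>(v)\<close>-vector space\<close>

locale qv_space = vector_space sc for sc :: "qv \<Rightarrow> 'm::ab_group_add \<Rightarrow> 'm" (infixr \<open>*s\<close> 75)
begin

abbreviation lat :: "qv set \<Rightarrow> 'm set \<Rightarrow> 'm set" where
  "lat \<equiv> lattice sc"

lemma latticeI:
  "finite T \<Longrightarrow> T \<subseteq> S \<Longrightarrow> (\<And>t. t \<in> T \<Longrightarrow> c t \<in> R) \<Longrightarrow> x = (\<Sum>t\<in>T. c t *s t) \<Longrightarrow> x \<in> lat R S"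
  unfolding lattice_def by blast

lemma latticeE:
  assumes "x \<in> lat R S"
  obtains T c where "finite T" "T \<subseteq> S" "\<And>t. t \<in> T \<Longrightarrow> c t \<in> R" "x = (\<Sum>t\<in>T. c t *s t)"
  using assms unfolding lattice_def by blast

lemma lattice_zero: "0 \<in> lat R S"
  by (rule latticeI[of "{}"]) simp_all

lemma lattice_scale_base: "c \<in> R \<Longrightarrow> t \<in> S \<Longrightarrow> c *s t \<in> lat R S"
  by (rule latticeI[of "{t}" _ "\<lambda>_. c"]) simp_all

lemma lattice_base: "1 \<in> R \<Longrightarrow> t \<in> S \<Longrightarrow> t \<in> lat R S"
  using lattice_scale_base[of 1 R t S] by simp

lemma lattice_mono: "S \<subseteq> S' \<Longrightarrow> lat R S \<subseteq> lat R S'"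
  unfolding lattice_def by blast

lemma lattice_mono_coeffs: "R \<subseteq> R' \<Longrightarrow> lat R S \<subseteq> lat R' S"
  unfolding lattice_def by blast

lemma lattice_add:
  assumes R: "subrng R" and x: "x \<in> lat R S" and y: "y \<in> lat R S"
  shows "x + y \<in> lat R S"
proof -
  obtain T1 c1 where T1: "finite T1" "T1 \<subseteq> S" "\<And>t. t \<in> T1 \<Longrightarrow> c1 t \<in> R" "x = (\<Sum>t\<in>T1. c1 t *s t)"
    using x by (elim latticeE) blast
  obtain T2 c2 where T2: "finite T2" "T2 \<subseteq> S" "\<And>t. t \<in> T2 \<Longrightarrow> c2 t \<in> R" "y = (\<Sum>t\<in>T2. c2 t *s t)"
    using y by (elim latticeE) blast
  define c where "c t = (if t \<in> T1 then c1 t else 0) + (if t \<in> T2 then c2 t else 0)" for t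
  have "x = (\<Sum>t\<in>T1 \<union> T2. if t \<in> T1 then c1 t *s t else 0)"
    using T1(1,4) T2(1) by (simp flip: sum.inter_restrict add: Int_absorb2)
  moreover have "y = (\<Sum>t\<in>T1 \<union> T2. if t \<in> T2 then c2 t *s t else 0)"
    using T2(1,4) T1(1) by (simp flip: sum.inter_restrict add: Int_absorb2)
  ultimately have "x + y = (\<Sum>t\<in>T1 \<union> T2. (if t \<in> T1 then c1 t *s t else 0) + (if t \<in> T2 then c2 t *s t else 0))"
    by (simp add: sum.distrib)
  also have "\<dots> = (\<Sum>t\<in>T1 \<union> T2. c t *s t)"
    by (intro sum.cong) (auto simp: c_def scale_left_distrib)
  finally have "x + y = (\<Sum>t\<in>T1 \<union> T2. c t *s t)" .
  moreover have "c t \<in> R" for t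
    unfolding c_def using T1(3) T2(3) subrngD(1,2)[OF R] by simp
  ultimately show ?thesis
    using T1(1,2) T2(1,2) by (intro latticeI[of "T1 \<union> T2" S c]) auto
qed

lemma lattice_scale:
  assumes R: "subrng R" and "r \<in> R" and x: "x \<in> lat R S"
  shows "r *s x \<in> lat R S"
proof -
  obtain T c where T: "finite T" "T \<subseteq> S" "\<And>t. t \<in> T \<Longrightarrow> c t \<in> R" "x = (\<Sum>t\<in>T. c t *s t)"
    using x by (elim latticeE) blast
  show ?thesis
    using T \<open>r \<in> R\<close> subrngD(3)[OF R]
    by (intro latticeI[of T S "\<lambda>t. r * c t"]) (simp_all add: scale_sum_right)
qed

lemma lattice_uminus:
  assumes R: "subrng R" and x: "x \<in> lat R S"
  shows "- x \<in> lat R S"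
proof -
  obtain T c where T: "finite T" "T \<subseteq> S" "\<And>t. t \<in> T \<Longrightarrow> c t \<in> R" "x = (\<Sum>t\<in>T. c t *s t)"
    using x by (elim latticeE) blast
  show ?thesis
    using T subrngD(4)[OF R]
    by (intro latticeI[of T S "\<lambda>t. - c t"]) (simp_all add: sum_negf)
qed

lemma lattice_diff: "subrng R \<Longrightarrow> x \<in> lat R S \<Longrightarrow> y \<in> lat R S \<Longrightarrow> x - y \<in> lat R S"
  using lattice_add[of R x S "- y"] lattice_uminus by simp

lemma lattice_sum:
  assumes R: "subrng R" and "\<And>t. t \<in> T \<Longrightarrow> f t \<in> lat R S"
  shows "sum f T \<in> lat R S"
  using assms(2)
  by (induction T rule: infinite_finite_induct) (simp_all add: lattice_zero lattice_add[OF R])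

lemma lattice_subset_lattice:
  assumes R: "subrng R" and S': "S' \<subseteq> lat R S"
  shows "lat R S' \<subseteq> lat R S"
proof
  fix x assume "x \<in> lat R S'"
  then obtain T c where T: "finite T" "T \<subseteq> S'" "\<And>t. t \<in> T \<Longrightarrow> c t \<in> R" "x = (\<Sum>t\<in>T. c t *s t)"
    by (elim latticeE) blast
  show "x \<in> lat R S"
    unfolding T(4) using T(2,3) S' by (intro lattice_sum[OF R] lattice_scale[OF R]) auto
qed

lemma lattice_subset_span: "lat R S \<subseteq> span S"
proof
  fix x assume "x \<in> lat R S"
  then obtain T c where T: "finite T" "T \<subseteq> S" "\<And>t. t \<in> T \<Longrightarrow> c t \<in> R" "x = (\<Sum>t\<in>T. c t *s t)"
    by (elim latticeE) blast
  show "x \<in> span S"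
    unfolding T(4) using T(2) by (intro span_sum span_scale) (auto intro: span_base)
qed

lemma lattice_image_inj:
  assumes inj: "inj_on g H" and x: "x \<in> lat R (g ` H)"
  obtains T c where "finite T" "T \<subseteq> H" "\<And>t. t \<in> T \<Longrightarrow> c t \<in> R" "x = (\<Sum>t\<in>T. c t *s g t)"
proof -
  obtain U c where U: "finite U" "U \<subseteq> g ` H" "\<And>u. u \<in> U \<Longrightarrow> c u \<in> R" "x = (\<Sum>u\<in>U. c u *s u)"
    using x by (elim latticeE) blast
  define T where "T = {t\<in>H. g t \<in> U}"
  have gT: "g ` T = U" and injT: "inj_on g T"
    using U(2) inj unfolding T_def by (auto intro: inj_on_subset)
  show thesis
  proof (rule that[of T "c \<circ> g"])
    show "finite T"
      using gT injT U(1) finite_imageD by blast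
    show "x = (\<Sum>t\<in>T. (c \<circ> g) t *s g t)"
      using U(4) gT sum.reindex[OF injT, of "\<lambda>u. c u *s u"] by simp
  qed (use U(3) gT in \<open>auto simp: T_def\<close>)
qed

end

section \<open>The dominance order on weights\<close>

lemma nsmul_0 [simp]: "nsmul 0 a = 0"
  by (simp add: nsmul_def)

lemma sum_nsmul_add:
  "(\<Sum>i\<in>I. nsmul (n i) (alpha i)) + (\<Sum>i\<in>I. nsmul (m i) (alpha i)) = (\<Sum>i\<in>I. nsmul (n i + m i) (alpha i))"
proof -
  have "nsmul (k + l) a = nsmul k a + nsmul l a" for k l and a :: "'a::ab_group_add"
    by (induction l) (simp_all add: nsmul_def add.assoc)
  then show ?thesis by (simp add: sum.distrib)
qed

locale simple_roots =
  fixes I :: "'i set" and alpha :: "'i \<Rightarrow> 'w::ab_group_add"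
  assumes finite_I: "finite I"
    and alpha_indep: "\<And>n m. (\<Sum>i\<in>I. nsmul (n i) (alpha i)) = (\<Sum>i\<in>I. nsmul (m i) (alpha i))
                        \<Longrightarrow> \<forall>i\<in>I. n i = m i"
begin

abbreviation weight_le (infix \<open>\<preceq>\<close> 50) where "weight_le \<equiv> wle I alpha"
abbreviation weight_less (infix \<open>\<prec>\<close> 50) where "weight_less \<equiv> wlt I alpha"

lemma wle_iff: "x \<preceq> y \<longleftrightarrow> (\<exists>n. y - x = (\<Sum>i\<in>I. nsmul (n i) (alpha i)))"
  by (auto simp: wle_def NI_def)

lemma wle_refl: "x \<preceq> x"
  unfolding wle_iff by (intro exI[of _ "\<lambda>_. 0"]) simp

lemma wle_trans:
  assumes "x \<preceq> y" "y \<preceq> z"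
  shows "x \<preceq> z"
proof -
  obtain n m where "y - x = (\<Sum>i\<in>I. nsmul (n i) (alpha i))" "z - y = (\<Sum>i\<in>I. nsmul (m i) (alpha i))"
    using assms unfolding wle_iff by blast
  then have "z - x = (\<Sum>i\<in>I. nsmul (m i + n i) (alpha i))"
    using sum_nsmul_add[of m alpha I n] by (metis diff_add_cancel add_diff_eq)
  then show ?thesis
    unfolding wle_iff by (auto intro!: exI[of _ "\<lambda>i. m i + n i"])
qed

lemma wle_antisym:
  assumes "x \<preceq> y" "y \<preceq> x"
  shows "x = y"
proof -
  obtain n m where nm: "y - x = (\<Sum>i\<in>I. nsmul (n i) (alpha i))" "x - y = (\<Sum>i\<in>I. nsmul (m i) (alpha i))"
    using assms unfolding wle_iff by blast
  have "(\<Sum>i\<in>I. nsmul (n i + m i) (alpha i)) = (y - x) + (x - y)"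
    using nm sum_nsmul_add[of n alpha I m] by simp
  also have "\<dots> = (\<Sum>i\<in>I. nsmul ((\<lambda>_. 0) i) (alpha i))"
    by simp
  finally
  have "\<forall>i\<in>I. n i = 0"
    using alpha_indep by fastforce
  then show "x = y"
    using nm(1) by simp
qed

lemma wlt_irrefl: "\<not> x \<prec> x"
  by (simp add: wlt_def)

lemma wlt_imp_wle: "x \<prec> y \<Longrightarrow> x \<preceq> y"
  by (simp add: wlt_def)

lemma wle_wlt_trans: "x \<preceq> y \<Longrightarrow> y \<prec> z \<Longrightarrow> x \<prec> z"
  unfolding wlt_def using wle_trans wle_antisym by blast

text \<open>Intervals are finite because the simple roots are independent: a weight in \<open>[x, l]\<close> is
  \<open>x + \<Sum> n\<^sub>i \<alpha>\<^sub>i\<close> with \<open>n\<^sub>i\<close> bounded by the coefficients of \<open>l - x\<close>.\<close>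
lemma finite_wle_interval: "finite {w. x \<preceq> w \<and> w \<preceq> l}"
proof (cases "x \<preceq> l")
  case True
  then obtain k where k: "l - x = (\<Sum>i\<in>I. nsmul (k i) (alpha i))"
    unfolding wle_iff by blast
  let ?f = "\<lambda>n. x + (\<Sum>i\<in>I. nsmul (n i) (alpha i))"
  have "{w. x \<preceq> w \<and> w \<preceq> l} \<subseteq> ?f ` (PiE I (\<lambda>i. {..k i}))"
  proof
    fix w assume "w \<in> {w. x \<preceq> w \<and> w \<preceq> l}"
    then obtain n m where nm: "w - x = (\<Sum>i\<in>I. nsmul (n i) (alpha i))" "l - w = (\<Sum>i\<in>I. nsmul (m i) (alpha i))"
      unfolding wle_iff by blast
    have "(\<Sum>i\<in>I. nsmul (n i + m i) (alpha i)) = (\<Sum>i\<in>I. nsmul (k i) (alpha i))"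
      using nm k sum_nsmul_add[of n alpha I m] by (simp add: algebra_simps)
    then have "\<forall>i\<in>I. n i + m i = k i"
      by (rule alpha_indep)
    then have "restrict n I \<in> PiE I (\<lambda>i. {..k i})"
      by auto
    moreover have "w = ?f (restrict n I)"
      using nm(1) by (simp add: algebra_simps cong: sum.cong)
    ultimately show "w \<in> ?f ` (PiE I (\<lambda>i. {..k i}))"
      by blast
  qed
  moreover have "finite (PiE I (\<lambda>i. {..k i}))"
    using finite_I by (intro finite_PiE) auto
  ultimately show ?thesis
    by (meson finite_imageI finite_subset)
next
  case False
  then have "{w. x \<preceq> w \<and> w \<preceq> l} = {}"
    using wle_trans by blast
  then show ?thesis
    by (simp only: finite.emptyI)
qed

end

section \<open>Based modules with a quasi \<open>K\<close>-matrix\<close>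

locale quasi_K_module = qv_space sc + simple_roots I alpha
  for sc :: "qv \<Rightarrow> 'm::ab_group_add \<Rightarrow> 'm" (infixr \<open>*s\<close> 75)
    and I :: "'i set" and alpha :: "'i \<Rightarrow> 'w::ab_group_add" +
  fixes B :: "'m set"
    and wt :: "'m \<Rightarrow> 'w"
    and psi :: "'m \<Rightarrow> 'm"
    and ups :: "'w \<Rightarrow> 'm \<Rightarrow> 'm"
  assumes independent_B: "independent B" and span_B: "span B = UNIV"
    and bounded: "\<exists>S. finite S \<and> (\<forall>b\<in>B. \<exists>l\<in>S. wt b \<preceq> l)"
    and psi_add: "\<And>x y. psi (x + y) = psi x + psi y"
    and psi_scale: "\<And>c x. psi (c *s x) = qbar c *s psi x"
    and psi_B: "\<And>b. b \<in> B \<Longrightarrow> psi b = b"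
    and ups_linear: "\<And>\<mu>. Vector_Spaces.linear sc sc (ups \<mu>)"
    and ups_0: "ups 0 = id"
    and ups_outside_cone: "\<And>\<mu>. \<mu> \<notin> NI I alpha \<Longrightarrow> ups \<mu> = (\<lambda>_. 0)"
    and ups_weight: "\<And>\<mu> b. b \<in> B \<Longrightarrow> ups \<mu> b \<in> span {b'\<in>B. wt b' = wt b + \<mu>}"
    and psii_involution: "\<And>x. Ups_act ups (psi (Ups_act ups (psi x))) = x"
    and psii_Aring_lattice: "(\<lambda>x. Ups_act ups (psi x)) ` lattice sc Aring B \<subseteq> lattice sc Aring B"
begin

definition basis_above :: "'m \<Rightarrow> 'm set" where
  "basis_above b = {b'\<in>B. wt b \<prec> wt b'}"

lemma basis_above_subset: "basis_above b \<subseteq> B"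
  by (auto simp: basis_above_def)

lemma basis_above_trans: "t \<in> basis_above b \<Longrightarrow> basis_above t \<subseteq> basis_above b"
  unfolding basis_above_def using wlt_imp_wle wle_wlt_trans by blast

definition weight_bounds :: "'w set" where
  "weight_bounds = (SOME S. finite S \<and> (\<forall>b\<in>B. \<exists>l\<in>S. wt b \<preceq> l))"

lemma finite_weight_bounds: "finite weight_bounds"
  and weight_bounded: "b \<in> B \<Longrightarrow> \<exists>l\<in>weight_bounds. wt b \<preceq> l"
  using someI_ex[OF bounded] unfolding weight_bounds_def by blast+

definition weights_above :: "'w \<Rightarrow> 'w set" where
  "weights_above x = {w. x \<preceq> w \<and> (\<exists>l\<in>weight_bounds. w \<preceq> l)}"

lemma finite_weights_above: "finite (weights_above x)"
proof (rule finite_subset)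
  show "weights_above x \<subseteq> (\<Union>l\<in>weight_bounds. {w. x \<preceq> w \<and> w \<preceq> l})"
    unfolding weights_above_def by blast
qed (use finite_weight_bounds finite_wle_interval in blast)

text \<open>Induction on \<open>height (wt b)\<close> is induction downwards from the top weights of \<open>M\<close>.\<close>
definition height :: "'w \<Rightarrow> nat" where
  "height x = card (weights_above x)"

lemma height_less:
  assumes "b \<in> B" "x \<prec> wt b"
  shows "height (wt b) < height x"
proof -
  obtain l where l: "l \<in> weight_bounds" "wt b \<preceq> l"
    using weight_bounded[OF assms(1)] by blast
  have "weights_above (wt b) \<subseteq> weights_above x"
    using assms(2) wlt_imp_wle wle_trans unfolding weights_above_def by blast
  moreover have "x \<in> weights_above x"
    using l wle_refl wle_trans[OF wlt_imp_wle[OF assms(2)] l(2)] unfolding weights_above_def by blast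
  moreover have "x \<notin> weights_above (wt b)"
    using assms(2) wle_antisym unfolding weights_above_def wlt_def by blast
  ultimately have "weights_above (wt b) \<subset> weights_above x"
    by blast
  then show ?thesis
    unfolding height_def using finite_weights_above by (simp add: psubset_card_mono)
qed

lemma exists_minimal_weight:
  assumes "finite N" "N \<noteq> {}" "N \<subseteq> B"
  obtains t0 where "t0 \<in> N" "\<And>t. t \<in> N \<Longrightarrow> \<not> wt t \<prec> wt t0"
proof -
  have "Max ((\<lambda>t. height (wt t)) ` N) \<in> (\<lambda>t. height (wt t)) ` N"
    using assms(1,2) by (intro Max_in) auto
  then obtain t0 where "t0 \<in> N" "height (wt t0) = Max ((\<lambda>t. height (wt t)) ` N)"
    by auto
  then have t0: "t0 \<in> N" "\<And>t. t \<in> N \<Longrightarrow> height (wt t) \<le> height (wt t0)"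
    using assms(1) by simp_all
  show thesis
  proof (rule that[OF t0(1)])
    fix t assume "t \<in> N"
    show "\<not> wt t \<prec> wt t0"
    proof
      assume "wt t \<prec> wt t0"
      then have "height (wt t0) < height (wt t)"
        using height_less t0(1) assms(3) by blast
      with t0(2)[OF \<open>t \<in> N\<close>] show False
        by simp
    qed
  qed
qed

definition coord :: "'m \<Rightarrow> 'm \<Rightarrow> qv" where
  "coord x b = representation B x b"

lemma coord_diff: "coord (x - y) b = coord x b - coord y b"
  and coord_scale: "coord (c *s x) b = c * coord x b"
  and coord_sum: "coord (sum f T) b = (\<Sum>t\<in>T. coord (f t) b)"
  and coord_zero: "coord 0 b = 0"
  and coord_basis: "t \<in> B \<Longrightarrow> coord t b = (if b = t then 1 else 0)"
  unfolding coord_def using span_B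
  by (simp_all add: representation_diff representation_scale representation_sum
      representation_zero representation_basis independent_B)

lemma finite_coord_support: "finite {b. coord x b \<noteq> 0}"
  unfolding coord_def by (rule finite_representation)

lemma coord_nonzero_in_B: "coord x b \<noteq> 0 \<Longrightarrow> b \<in> B"
  unfolding coord_def by (rule representation_ne_zero)

lemma coord_expansion: "x = (\<Sum>b | coord x b \<noteq> 0. coord x b *s b)"
  unfolding coord_def using sum_nonzero_representation_eq[OF independent_B] span_B by simp

lemma coord_support_span: "x \<in> span S \<Longrightarrow> S \<subseteq> B \<Longrightarrow> coord x b \<noteq> 0 \<Longrightarrow> b \<in> S"
  unfolding coord_def using representation_extend[OF independent_B] representation_ne_zero by metis

lemma lattice_coord_iff:
  assumes "S \<subseteq> B" "subrng R"
  shows "x \<in> lat R S \<longleftrightarrow> (\<forall>b. coord x b \<in> R \<and> (coord x b \<noteq> 0 \<longrightarrow> b \<in> S))"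
proof
  assume "x \<in> lat R S"
  then obtain T c where T: "finite T" "T \<subseteq> S" "\<And>t. t \<in> T \<Longrightarrow> c t \<in> R" "x = (\<Sum>t\<in>T. c t *s t)"
    by (elim latticeE) blast
  have "coord x b = (\<Sum>t\<in>T. if b = t then c t else 0)" for b
    using T(2,4) assms(1) by (auto simp: coord_sum coord_scale coord_basis intro!: sum.cong)
  then have "coord x b = (if b \<in> T then c b else 0)" for b
    using T(1) by simp
  then show "\<forall>b. coord x b \<in> R \<and> (coord x b \<noteq> 0 \<longrightarrow> b \<in> S)"
    using T(2,3) subrngD(1)[OF assms(2)] by auto
next
  assume "\<forall>b. coord x b \<in> R \<and> (coord x b \<noteq> 0 \<longrightarrow> b \<in> S)"
  then show "x \<in> lat R S"
    using finite_coord_support coord_expansion by (intro latticeI[of "{b. coord x b \<noteq> 0}" S "coord x"]) auto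
qed

lemma ups_hom: "module_hom sc sc (ups \<mu>)"
  using module_hom_iff_linear ups_linear by blast

lemma ups_add: "ups \<mu> (x + y) = ups \<mu> x + ups \<mu> y"
  and ups_scale: "ups \<mu> (c *s x) = c *s ups \<mu> x"
  and ups_sum: "ups \<mu> (sum f T) = (\<Sum>t\<in>T. ups \<mu> (f t))"
  by (simp_all add: module_hom.add[OF ups_hom] module_hom.scale[OF ups_hom] module_hom.sum[OF ups_hom])

lemma ups_support_basis:
  assumes "b \<in> B"
  shows "{\<mu>. ups \<mu> b \<noteq> 0} \<subseteq> (\<lambda>w. w - wt b) ` weights_above (wt b)"
proof
  fix \<mu> assume "\<mu> \<in> {\<mu>. ups \<mu> b \<noteq> 0}"
  then have ne: "ups \<mu> b \<noteq> 0"
    by simp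
  then have cone: "\<mu> \<in> NI I alpha"
    using ups_outside_cone by metis
  have "{b'\<in>B. wt b' = wt b + \<mu>} \<noteq> {}"
    using ups_weight[OF assms, of \<mu>] ne by (metis span_empty singletonD)
  then obtain b' where b': "b' \<in> B" "wt b' = wt b + \<mu>"
    by blast
  have "wt b \<preceq> wt b'"
    using b'(2) cone by (simp add: wle_def)
  then have "wt b' \<in> weights_above (wt b)"
    using weight_bounded[OF b'(1)] unfolding weights_above_def by blast
  then show "\<mu> \<in> (\<lambda>w. w - wt b) ` weights_above (wt b)"
    by (rule rev_image_eqI) (simp add: b'(2))
qed

lemma finite_ups_support: "finite {\<mu>. ups \<mu> x \<noteq> 0}"
proof (rule finite_subset)
  let ?T = "{b. coord x b \<noteq> 0}"
  show "{\<mu>. ups \<mu> x \<noteq> 0} \<subseteq> (\<Union>b\<in>?T. {\<mu>. ups \<mu> b \<noteq> 0})"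
  proof
    fix \<mu> assume "\<mu> \<in> {\<mu>. ups \<mu> x \<noteq> 0}"
    moreover have "ups \<mu> x = (\<Sum>b\<in>?T. coord x b *s ups \<mu> b)"
      by (subst coord_expansion[of x]) (simp add: ups_sum ups_scale)
    ultimately have "(\<Sum>b\<in>?T. coord x b *s ups \<mu> b) \<noteq> 0"
      by simp
    then obtain b where "b \<in> ?T" "ups \<mu> b \<noteq> 0"
      by (metis (mono_tags, lifting) scale_zero_right sum.neutral)
    then show "\<mu> \<in> (\<Union>b\<in>?T. {\<mu>. ups \<mu> b \<noteq> 0})"
      by blast
  qed
  show "finite (\<Union>b\<in>?T. {\<mu>. ups \<mu> b \<noteq> 0})"
  proof (rule finite_UN_I[OF finite_coord_support])
    fix b assume "b \<in> ?T"
    then show "finite {\<mu>. ups \<mu> b \<noteq> 0}"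
      using coord_nonzero_in_B ups_support_basis finite_weights_above
      by (meson finite_imageI finite_subset mem_Collect_eq)
  qed
qed

lemma Ups_act_eq_sum:
  "finite F \<Longrightarrow> {\<mu>. ups \<mu> x \<noteq> 0} \<subseteq> F \<Longrightarrow> Ups_act ups x = (\<Sum>\<mu>\<in>F. ups \<mu> x)"
  unfolding Ups_act_def by (rule sum.mono_neutral_left) auto

lemma Ups_act_add: "Ups_act ups (x + y) = Ups_act ups x + Ups_act ups y"
  and Ups_act_scale: "Ups_act ups (c *s x) = c *s Ups_act ups x"
proof -
  let ?F = "{\<mu>. ups \<mu> x \<noteq> 0} \<union> {\<mu>. ups \<mu> y \<noteq> 0} \<union> {\<mu>. ups \<mu> (x + y) \<noteq> 0} \<union> {\<mu>. ups \<mu> (c *s x) \<noteq> 0}"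
  have F: "finite ?F"
    using finite_ups_support by blast
  have "Ups_act ups z = (\<Sum>\<mu>\<in>?F. ups \<mu> z)" if "z \<in> {x, y, x + y, c *s x}" for z
    using that by (intro Ups_act_eq_sum[OF F]) auto
  then show "Ups_act ups (x + y) = Ups_act ups x + Ups_act ups y"
    and "Ups_act ups (c *s x) = c *s Ups_act ups x"
    by (simp_all add: ups_add ups_scale sum.distrib scale_sum_right)
qed

definition psii :: "'m \<Rightarrow> 'm" where
  "psii x = Ups_act ups (psi x)"

lemma psii_add: "psii (x + y) = psii x + psii y"
  and psii_scale: "psii (c *s x) = qbar c *s psii x"
  by (simp_all add: psii_def psi_add psi_scale Ups_act_add Ups_act_scale)

lemma psii_diff: "psii (x - y) = psii x - psii y"
  using psii_add[of "x - y" y] by (simp add: algebra_simps)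

lemma psii_zero [simp]: "psii 0 = 0"
  using psii_add[of 0 0] by simp

lemma psii_sum: "psii (sum f T) = (\<Sum>t\<in>T. psii (f t))"
  by (induction T rule: infinite_finite_induct) (simp_all add: psii_add)

lemma psii_psii [simp]: "psii (psii x) = x"
  using psii_involution by (simp add: psii_def)

lemma psii_basis_span:
  assumes b: "b \<in> B"
  shows "psii b - b \<in> span (basis_above b)"
proof -
  let ?S = "{\<mu>. ups \<mu> b \<noteq> 0}"
  have "psii b = (\<Sum>\<mu>\<in>insert 0 ?S. ups \<mu> b)"
    unfolding psii_def psi_B[OF b] using finite_ups_support by (intro Ups_act_eq_sum) auto
  also have "\<dots> = b + (\<Sum>\<mu>\<in>?S - {0}. ups \<mu> b)"
    using finite_ups_support by (simp add: sum.insert_remove ups_0)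
  finally have "psii b - b = (\<Sum>\<mu>\<in>?S - {0}. ups \<mu> b)"
    by simp
  moreover have "ups \<mu> b \<in> span (basis_above b)" if "\<mu> \<noteq> 0" for \<mu>
  proof (cases "\<mu> \<in> NI I alpha")
    case True
    then have "{b'\<in>B. wt b' = wt b + \<mu>} \<subseteq> basis_above b"
      using that unfolding basis_above_def wlt_def wle_def by auto
    then show ?thesis
      using ups_weight[OF b, of \<mu>] span_mono by blast
  qed (simp add: ups_outside_cone span_zero)
  ultimately show ?thesis
    by (auto intro: span_sum)
qed

lemma psii_basis_lattice:
  assumes b: "b \<in> B"
  shows "psii b - b \<in> lat Aring (basis_above b)"
proof -
  have "b \<in> lat Aring B"
    using Zvinv_subset_Aring one_in_Zvinv b by (blast intro: lattice_base)
  then have "psii b - b \<in> lat Aring B"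
    using psii_Aring_lattice lattice_diff[OF subrng_Aring] unfolding psii_def by blast
  then show ?thesis
    using coord_support_span[OF psii_basis_span[OF b] basis_above_subset]
    by (simp add: lattice_coord_iff[OF basis_above_subset subrng_Aring] lattice_coord_iff[OF order_refl subrng_Aring])
qed

lemma coord_unitriangular_sum:
  assumes T: "finite T" "T \<subseteq> B" and d: "\<And>t. t \<in> T \<Longrightarrow> d t - t \<in> span (basis_above t)"
    and t0: "t0 \<in> T" and minimal: "\<And>t. t \<in> T \<Longrightarrow> a t \<noteq> 0 \<Longrightarrow> \<not> wt t \<prec> wt t0"
  shows "coord (\<Sum>t\<in>T. a t *s d t) t0 = a t0"
proof -
  have "a t * coord (d t) t0 = (if t = t0 then a t0 else 0)" if t: "t \<in> T" for t
  proof -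
    have "coord (d t) t0 = coord t t0 + coord (d t - t) t0"
      by (simp add: coord_diff)
    moreover have "coord (d t - t) t0 \<noteq> 0 \<Longrightarrow> wt t \<prec> wt t0"
      using coord_support_span[OF d[OF t] basis_above_subset] unfolding basis_above_def by blast
    moreover have "t \<in> B"
      using t T(2) by blast
    ultimately show ?thesis
      using minimal[OF t] wlt_irrefl by (auto simp: coord_basis)
  qed
  then have "coord (\<Sum>t\<in>T. a t *s d t) t0 = (\<Sum>t\<in>T. if t = t0 then a t0 else 0)"
    by (simp add: coord_sum coord_scale)
  also have "\<dots> = a t0"
    using T(1) t0 by simp
  finally show ?thesis .
qed

lemma unitriangular_independent:
  assumes H: "H \<subseteq> B" and g: "\<And>t. t \<in> H \<Longrightarrow> g t - t \<in> span (basis_above t)"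
    and T: "finite T" "T \<subseteq> H" and zero: "(\<Sum>t\<in>T. c t *s g t) = 0"
  shows "\<forall>t\<in>T. c t = 0"
proof (rule ccontr)
  assume "\<not> (\<forall>t\<in>T. c t = 0)"
  then have N: "finite {t\<in>T. c t \<noteq> 0}" "{t\<in>T. c t \<noteq> 0} \<noteq> {}" "{t\<in>T. c t \<noteq> 0} \<subseteq> B"
    using T H by auto
  obtain t0 where t0: "t0 \<in> {t\<in>T. c t \<noteq> 0}" "\<And>t. t \<in> {t\<in>T. c t \<noteq> 0} \<Longrightarrow> \<not> wt t \<prec> wt t0"
    using exists_minimal_weight[OF N] by blast
  have "coord (\<Sum>t\<in>T. c t *s g t) t0 = c t0"
    using T H g t0 by (intro coord_unitriangular_sum) auto
  with zero t0(1) show False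
    by (simp add: coord_zero)
qed

lemma unitriangular_inj_on:
  assumes H: "H \<subseteq> B" and g: "\<And>t. t \<in> H \<Longrightarrow> g t - t \<in> span (basis_above t)"
  shows "inj_on g H"
proof
  fix x y assume xy: "x \<in> H" "y \<in> H" "g x = g y"
  show "x = y"
  proof (rule ccontr)
    assume "x \<noteq> y"
    then have "(\<Sum>t\<in>{x, y}. (if t = x then 1 else -1) *s g t) = 0"
      using xy(3) by simp
    then show False
      using unitriangular_independent[OF H g, of "{x, y}" "\<lambda>t. if t = x then 1 else -1"] xy(1,2)
      by simp
  qed
qed

lemma unitriangular_independent_image:
  assumes H: "H \<subseteq> B" and g: "\<And>t. t \<in> H \<Longrightarrow> g t - t \<in> span (basis_above t)"
  shows "independent (g ` H)"
  unfolding independent_explicit_finite_subsets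
proof (intro allI impI ballI)
  fix S u v assume S: "S \<subseteq> g ` H" "finite S" and zero: "(\<Sum>v\<in>S. u v *s v) = 0" and "v \<in> S"
  define T where "T = {t\<in>H. g t \<in> S}"
  have gT: "g ` T = S" and injT: "inj_on g T"
    using S(1) unitriangular_inj_on[OF H g] unfolding T_def by (auto intro: inj_on_subset)
  then have "finite T"
    using S(2) finite_imageD by blast
  moreover have "(\<Sum>t\<in>T. u (g t) *s g t) = 0"
    using zero gT sum.reindex[OF injT, of "\<lambda>v. u v *s v"] by simp
  ultimately have "\<forall>t\<in>T. u (g t) = 0"
    by (intro unitriangular_independent[OF H g]) (auto simp: T_def)
  then show "u v = 0"
    using \<open>v \<in> S\<close> gT by blast
qed

lemma unitriangular_lattice_contains_basis:
  assumes R: "subrng R" "1 \<in> R" and H: "H \<subseteq> B"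
    and up: "\<And>b b'. b \<in> H \<Longrightarrow> b' \<in> basis_above b \<Longrightarrow> b' \<in> H"
    and g: "\<And>b. b \<in> H \<Longrightarrow> g b - b \<in> lat R (basis_above b)"
  shows "H \<subseteq> lat R (g ` H)"
proof
  fix b assume "b \<in> H"
  then show "b \<in> lat R (g ` H)"
  proof (induction "height (wt b)" arbitrary: b rule: less_induct)
    case less
    have "basis_above b \<subseteq> lat R (g ` H)"
    proof
      fix t assume t: "t \<in> basis_above b"
      then have "height (wt t) < height (wt b)"
        using height_less by (auto simp: basis_above_def)
      then show "t \<in> lat R (g ` H)"
        using less.hyps up[OF less.prems t] by blast
    qed
    then have "g b - b \<in> lat R (g ` H)"
      using g[OF less.prems] lattice_subset_lattice[OF R(1)] by blast
    moreover have "g b \<in> lat R (g ` H)"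
      using less.prems R(2) by (blast intro: lattice_base)
    ultimately show ?case
      using lattice_diff[OF R(1), of "g b" "g ` H" "g b - b"] by simp
  qed
qed

lemma psii_fixed_in_vinvZvinv_lattice:
  assumes x: "x \<in> lat vinvZvinv B" and fixed: "psii x = x"
  shows "x = 0"
proof (rule ccontr)
  assume "x \<noteq> 0"
  let ?N = "{b. coord x b \<noteq> 0}"
  have "?N \<noteq> {}"
  proof
    assume "?N = {}"
    then have "x = 0"
      by (subst coord_expansion) simp
    with \<open>x \<noteq> 0\<close> show False ..
  qed
  then have N: "finite ?N" "?N \<noteq> {}" "?N \<subseteq> B"
    using finite_coord_support coord_nonzero_in_B by auto
  then obtain t0 where t0: "t0 \<in> ?N" "\<And>t. t \<in> ?N \<Longrightarrow> \<not> wt t \<prec> wt t0"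
    using exists_minimal_weight[OF N] by blast
  have "coord (psii x) t0 = coord (\<Sum>b\<in>?N. qbar (coord x b) *s psii b) t0"
    by (subst coord_expansion[of x]) (simp add: psii_sum psii_scale)
  also have "\<dots> = qbar (coord x t0)"
  proof (rule coord_unitriangular_sum[OF N(1,3)])
    show "psii t - t \<in> span (basis_above t)" if "t \<in> ?N" for t
      using that N(3) psii_basis_span by blast
  qed (use t0 in auto)
  finally have "qbar (coord x t0) = coord x t0"
    using fixed by simp
  moreover have "coord x t0 \<in> vinvZvinv"
    using x by (simp add: lattice_coord_iff[OF order_refl subrng_vinvZvinv])
  ultimately show False
    using qbar_fixed_in_vinvZvinv t0(1) by simp
qed

section \<open>The \<open>\<imath>\<close>-canonical basis\<close>

definition is_ibasis_elem :: "'m \<Rightarrow> 'm \<Rightarrow> bool" where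
  "is_ibasis_elem b y \<longleftrightarrow> psii y = y \<and> y - b \<in> lat vinvZvinv (basis_above b)"

lemma is_ibasis_elem_lattice:
  "is_ibasis_elem b y \<Longrightarrow> subrng R \<Longrightarrow> vinvZvinv \<subseteq> R \<Longrightarrow> y - b \<in> lat R (basis_above b)"
  unfolding is_ibasis_elem_def using lattice_mono_coeffs by blast

lemma is_ibasis_elem_span: "is_ibasis_elem b y \<Longrightarrow> y - b \<in> span (basis_above b)"
  unfolding is_ibasis_elem_def using lattice_subset_span by blast

lemma is_ibasis_elem_unique:
  assumes "is_ibasis_elem b y" "is_ibasis_elem b y'"
  shows "y = y'"
proof -
  have "y - y' = (y - b) - (y' - b)"
    by simp
  also have "\<dots> \<in> lat vinvZvinv (basis_above b)"
    using assms unfolding is_ibasis_elem_def by (blast intro: lattice_diff[OF subrng_vinvZvinv])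
  finally have "y - y' \<in> lat vinvZvinv B"
    using lattice_mono[OF basis_above_subset] by blast
  moreover have "psii (y - y') = y - y'"
    using assms by (simp add: is_ibasis_elem_def psii_diff)
  ultimately have "y - y' = 0"
    by (rule psii_fixed_in_vinvZvinv_lattice)
  then show ?thesis
    by simp
qed

lemma psii_coeffs_anti_invariant:
  assumes g: "\<And>t. t \<in> basis_above b \<Longrightarrow> is_ibasis_elem t (g t)"
    and T: "finite T" "T \<subseteq> basis_above b" and eq: "psii b - b = (\<Sum>t\<in>T. s t *s g t)"
  shows "\<forall>t\<in>T. s t + qbar (s t) = 0"
proof -
  have fixed: "psii (g t) = g t" if "t \<in> T" for t
    using g T(2) that unfolding is_ibasis_elem_def by blast
  have psii_b: "psii b = b + (\<Sum>t\<in>T. s t *s g t)"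
    using eq by (metis add.commute diff_add_cancel)
  have "b = psii (b + (\<Sum>t\<in>T. s t *s g t))"
    by (simp flip: psii_b)
  also have "\<dots> = psii b + (\<Sum>t\<in>T. qbar (s t) *s g t)"
    using fixed by (simp add: psii_add psii_sum psii_scale)
  also have "\<dots> = b + (\<Sum>t\<in>T. (s t + qbar (s t)) *s g t)"
    unfolding psii_b by (simp add: scale_left_distrib sum.distrib add.assoc)
  finally have zero: "(\<Sum>t\<in>T. (s t + qbar (s t)) *s g t) = 0"
    by simp
  have unitri: "\<And>t. t \<in> basis_above b \<Longrightarrow> g t - t \<in> span (basis_above t)"
    using g is_ibasis_elem_span by blast
  show ?thesis
    by (rule unitriangular_independent[OF basis_above_subset unitri T zero])
qed

lemma scaled_ibasis_elem_in_lattice_above: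
  assumes g: "\<And>t. t \<in> basis_above b \<Longrightarrow> is_ibasis_elem t (g t)" and t: "t \<in> basis_above b"
    and c: "c \<in> vinvZvinv"
  shows "c *s g t \<in> lat vinvZvinv (basis_above b)"
proof -
  have "g t - t \<in> lat vinvZvinv (basis_above b)"
    using g[OF t] lattice_mono[OF basis_above_trans[OF t]] unfolding is_ibasis_elem_def by blast
  then have "c *s t + c *s (g t - t) \<in> lat vinvZvinv (basis_above b)"
    using c t by (intro lattice_add[OF subrng_vinvZvinv] lattice_scale[OF subrng_vinvZvinv] lattice_scale_base)
  then show ?thesis
    by (simp add: scale_right_diff_distrib)
qed

lemma is_ibasis_elem_correction:
  assumes g: "\<And>t. t \<in> basis_above b \<Longrightarrow> is_ibasis_elem t (g t)"
    and T: "finite T" "T \<subseteq> basis_above b" and c: "\<And>t. t \<in> T \<Longrightarrow> c t \<in> vinvZvinv"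
    and eq: "psii b - b = (\<Sum>t\<in>T. (c t - qbar (c t)) *s g t)"
  shows "is_ibasis_elem b (b + (\<Sum>t\<in>T. c t *s g t))"
  unfolding is_ibasis_elem_def
proof
  have fixed: "psii (g t) = g t" if "t \<in> T" for t
    using g T(2) that unfolding is_ibasis_elem_def by blast
  have psii_b: "psii b = b + (\<Sum>t\<in>T. (c t - qbar (c t)) *s g t)"
    using eq by (metis add.commute diff_add_cancel)
  have "psii (b + (\<Sum>t\<in>T. c t *s g t)) = psii b + (\<Sum>t\<in>T. qbar (c t) *s g t)"
    using fixed by (simp add: psii_add psii_sum psii_scale)
  also have "\<dots> = b + (\<Sum>t\<in>T. c t *s g t)"
    unfolding psii_b by (simp add: scale_left_diff_distrib sum_subtractf)
  finally show "psii (b + (\<Sum>t\<in>T. c t *s g t)) = b + (\<Sum>t\<in>T. c t *s g t)" .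
  have "c t *s g t \<in> lat vinvZvinv (basis_above b)" if "t \<in> T" for t
    using that T(2) c scaled_ibasis_elem_in_lattice_above[OF g] by blast
  then show "b + (\<Sum>t\<in>T. c t *s g t) - b \<in> lat vinvZvinv (basis_above b)"
    by (simp add: lattice_sum[OF subrng_vinvZvinv])
qed

lemma exists_ibasis_elem_step:
  assumes b: "b \<in> B" and g: "\<And>t. t \<in> basis_above b \<Longrightarrow> is_ibasis_elem t (g t)"
  shows "\<exists>y. is_ibasis_elem b y"
proof -
  have unitri: "\<And>t. t \<in> basis_above b \<Longrightarrow> g t - t \<in> span (basis_above t)"
    using g is_ibasis_elem_span by blast
  have "basis_above b \<subseteq> lat Aring (g ` basis_above b)"
  proof (rule unitriangular_lattice_contains_basis[OF subrng_Aring _ basis_above_subset])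
    show "1 \<in> Aring"
      using one_in_Zvinv Zvinv_subset_Aring by blast
    show "t' \<in> basis_above b" if "t \<in> basis_above b" "t' \<in> basis_above t" for t t'
      using that basis_above_trans by blast
    show "g t - t \<in> lat Aring (basis_above t)" if "t \<in> basis_above b" for t
      using g[OF that] subrng_Aring vinvZvinv_subset_Zvinv Zvinv_subset_Aring
      by (blast intro: is_ibasis_elem_lattice)
  qed
  then have psii_b: "psii b - b \<in> lat Aring (g ` basis_above b)"
    using psii_basis_lattice[OF b] lattice_subset_lattice[OF subrng_Aring] by blast
  have inj: "inj_on g (basis_above b)"
    by (rule unitriangular_inj_on[OF basis_above_subset]) (rule unitri)
  obtain T s where T: "finite T" "T \<subseteq> basis_above b" "\<And>t. t \<in> T \<Longrightarrow> s t \<in> Aring"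
    and eq: "psii b - b = (\<Sum>t\<in>T. s t *s g t)"
    using lattice_image_inj[OF inj psii_b] by blast
  have "\<forall>t\<in>T. \<exists>c. c \<in> vinvZvinv \<and> s t = c - qbar c"
  proof
    fix t assume "t \<in> T"
    have "qbar (s t) = - s t"
      using psii_coeffs_anti_invariant[OF g T(1,2) eq] \<open>t \<in> T\<close> by (simp add: eq_neg_iff_add_eq_0 add.commute)
    with T(3)[OF \<open>t \<in> T\<close>] obtain c where "c \<in> vinvZvinv" "s t = c - qbar c"
      by (rule qbar_anti_invariant_Aring)
    then show "\<exists>c. c \<in> vinvZvinv \<and> s t = c - qbar c"
      by blast
  qed
  then obtain c where c: "\<forall>t\<in>T. c t \<in> vinvZvinv \<and> s t = c t - qbar (c t)"
    by (rule bchoice[THEN exE])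
  have "psii b - b = (\<Sum>t\<in>T. (c t - qbar (c t)) *s g t)"
    unfolding eq using c by (intro sum.cong) auto
  then show ?thesis
    using is_ibasis_elem_correction[OF g T(1,2)] c by blast
qed

lemma ex1_ibasis_elem: "b \<in> B \<Longrightarrow> \<exists>!y. is_ibasis_elem b y"
proof (induction "height (wt b)" arbitrary: b rule: less_induct)
  case less
  have "is_ibasis_elem t (THE y. is_ibasis_elem t y)" if "t \<in> basis_above b" for t
  proof (rule theI')
    show "\<exists>!y. is_ibasis_elem t y"
      using that less.hyps height_less by (auto simp: basis_above_def)
  qed
  then obtain y where "is_ibasis_elem b y"
    using exists_ibasis_elem_step[OF less.prems] by meson
  then show ?case
    using is_ibasis_elem_unique by (intro ex1I) auto
qed

definition is_ibasis :: "('m \<Rightarrow> 'm) \<Rightarrow> bool" where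
  "is_ibasis g \<longleftrightarrow> g \<in> extensional B \<and> inj_on g B \<and> independent (g ` B) \<and> span (g ` B) = UNIV
     \<and> (\<forall>b\<in>B. is_ibasis_elem b (g b))"

lemma is_ibasis_lattice:
  assumes g: "\<And>b. b \<in> B \<Longrightarrow> is_ibasis_elem b (g b)"
    and R: "subrng R" "1 \<in> R" "vinvZvinv \<subseteq> R"
  shows "lat R (g ` B) = lat R B"
proof
  have "g b \<in> lat R B" if "b \<in> B" for b
  proof -
    have "g b - b \<in> lat R B"
      using is_ibasis_elem_lattice[OF g[OF that] R(1,3)] lattice_mono[OF basis_above_subset] by blast
    moreover have "b \<in> lat R B"
      using R(2) that by (rule lattice_base)
    ultimately show ?thesis
      using lattice_add[OF R(1)] by fastforce
  qed
  then show "lat R (g ` B) \<subseteq> lat R B"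
    by (intro lattice_subset_lattice[OF R(1)]) blast
  have "B \<subseteq> lat R (g ` B)"
    using is_ibasis_elem_lattice[OF g R(1,3)] by (intro unitriangular_lattice_contains_basis[OF R(1,2)]) (auto simp: basis_above_def)
  then show "lat R B \<subseteq> lat R (g ` B)"
    by (rule lattice_subset_lattice[OF R(1)])
qed

lemma ex1_ibasis: "\<exists>!g. is_ibasis g"
proof (rule ex1I)
  let ?g = "restrict (\<lambda>b. THE y. is_ibasis_elem b y) B"
  have elem: "is_ibasis_elem b (?g b)" if "b \<in> B" for b
    using that ex1_ibasis_elem by (simp add: theI')
  have unitri: "\<And>b. b \<in> B \<Longrightarrow> ?g b - b \<in> span (basis_above b)"
    using elem is_ibasis_elem_span by blast
  have "B \<subseteq> span (?g ` B)"
    using is_ibasis_lattice[OF elem subrng_Zvinv one_in_Zvinv vinvZvinv_subset_Zvinv]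
      lattice_base[OF one_in_Zvinv] lattice_subset_span by blast
  then have "span (?g ` B) = UNIV"
    using span_B span_mono span_span by (metis top.extremum_uniqueI)
  moreover have "inj_on ?g B"
    by (rule unitriangular_inj_on[OF order_refl]) (rule unitri)
  moreover have "independent (?g ` B)"
    by (rule unitriangular_independent_image[OF order_refl]) (rule unitri)
  ultimately show "is_ibasis ?g"
    unfolding is_ibasis_def using elem restrict_extensional by blast
next
  fix g assume g: "is_ibasis g"
  show "g = restrict (\<lambda>b. THE y. is_ibasis_elem b y) B"
  proof (rule extensionalityI[of g B])
    show "g \<in> extensional B"
      using g unfolding is_ibasis_def by blast
    fix b assume "b \<in> B"
    with g have "is_ibasis_elem b (g b)"
      unfolding is_ibasis_def by blast
    then show "g b = restrict (\<lambda>b. THE y. is_ibasis_elem b y) B b"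
      using \<open>b \<in> B\<close> ex1_ibasis_elem by (simp add: the1_equality)
  qed simp
qed

lemma is_ibasis_lattice_basis:
  assumes "is_ibasis g" and R: "subrng R" "1 \<in> R" "vinvZvinv \<subseteq> R"
  shows "lattice_basis sc R (g ` B) (lat R B)"
  unfolding lattice_basis_def indep_over_def
proof
  show "lat R (g ` B) = lat R B"
    using assms is_ibasis_lattice unfolding is_ibasis_def by blast
  show "\<forall>T c. finite T \<and> T \<subseteq> g ` B \<and> (\<forall>t\<in>T. c t \<in> R) \<and> (\<Sum>t\<in>T. c t *s t) = 0 \<longrightarrow> (\<forall>t\<in>T. c t = 0)"
    using assms(1) unfolding is_ibasis_def independent_explicit_finite_subsets by blast
qed

end

theorem mainTheorem2:
  fixes sc :: "qv \<Rightarrow> 'm::ab_group_add \<Rightarrow> 'm"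
    and B :: "'m set"
    and wt :: "'m \<Rightarrow> 'w::ab_group_add"
    and I :: "'i set" and alpha :: "'i \<Rightarrow> 'w"
    and psi :: "'m \<Rightarrow> 'm"
    and ups :: "'w \<Rightarrow> 'm \<Rightarrow> 'm"
  assumes vs: "vector_space sc"
    and I_fin: "finite I"
    and alpha_indep: "\<And>n m. (\<Sum>i\<in>I. nsmul (n i) (alpha i)) = (\<Sum>i\<in>I. nsmul (m i) (alpha i))
                        \<Longrightarrow> \<forall>i\<in>I. n i = m i"
    and B_basis: "module.independent sc B" "module.span sc B = UNIV"
    and bounded: "\<exists>S. finite S \<and> (\<forall>b\<in>B. \<exists>l\<in>S. wle I alpha (wt b) l)"
    and psi_add: "\<And>x y. psi (x + y) = psi x + psi y"
    and psi_anti: "\<And>c x. psi (sc c x) = sc (qbar c) (psi x)"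
    and psi_inv: "\<And>x. psi (psi x) = x"
    and psi_B: "\<And>b. b \<in> B \<Longrightarrow> psi b = b"
    and ups_lin: "\<And>\<mu>. Vector_Spaces.linear sc sc (ups \<mu>)"
    and ups_0: "ups 0 = id"
    and ups_supp: "\<And>\<mu>. \<mu> \<notin> NI I alpha \<Longrightarrow> ups \<mu> = (\<lambda>_. 0)"
    and ups_wt: "\<And>\<mu> b. b \<in> B \<Longrightarrow>
                   ups \<mu> b \<in> module.span sc {b'\<in>B. wt b' = wt b + \<mu>}"
    and psii_inv: "\<And>x. Ups_act ups (psi (Ups_act ups (psi x))) = x"
    and psii_lattice: "(\<lambda>x. Ups_act ups (psi x)) ` lattice sc Aring B \<subseteq> lattice sc Aring B"
  shows "(\<exists>!g. g \<in> extensional B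
            \<and> inj_on g B \<and> module.independent sc (g ` B) \<and> module.span sc (g ` B) = UNIV
            \<and> (\<forall>b\<in>B. Ups_act ups (psi (g b)) = g b
                     \<and> g b - b \<in> lattice sc vinvZvinv {b'\<in>B. wlt I alpha (wt b) (wt b')}))
         \<and> (\<forall>g. (g \<in> extensional B
            \<and> inj_on g B \<and> module.independent sc (g ` B) \<and> module.span sc (g ` B) = UNIV
            \<and> (\<forall>b\<in>B. Ups_act ups (psi (g b)) = g b
                     \<and> g b - b \<in> lattice sc vinvZvinv {b'\<in>B. wlt I alpha (wt b) (wt b')}))
            \<longrightarrow> lattice_basis sc Aring (g ` B) (lattice sc Aring B)
              \<and> lattice_basis sc Zvinv (g ` B) (lattice sc Zvinv B))"
proof -
  interpret quasi_K_module sc I alpha B wt psi ups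
    by (intro quasi_K_module.intro qv_space.intro simple_roots.intro quasi_K_module_axioms.intro)
      (fact vs I_fin alpha_indep B_basis bounded psi_add psi_anti psi_B ups_lin ups_0 ups_supp ups_wt
        psii_inv psii_lattice)+
  have "1 \<in> Aring" "vinvZvinv \<subseteq> Aring"
    using one_in_Zvinv Zvinv_subset_Aring vinvZvinv_subset_Zvinv by blast+
  then show ?thesis
    using ex1_ibasis is_ibasis_lattice_basis[OF _ subrng_Aring] is_ibasis_lattice_basis[OF _ subrng_Zvinv]
      one_in_Zvinv vinvZvinv_subset_Zvinv
    unfolding is_ibasis_def is_ibasis_elem_def psii_def basis_above_def by blast
qed

end
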